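(* Let $N\ge3$ and consider, in the field variables $(\rho,\psi,\mu_1,\dots,\mu_{N-2})$, the hydrodynamic Poisson bracket $$\{F,G\}=\int\Big(\partial_xF_\psi G_\rho-F_\rho\partial_xG_\psi+\partial_xF_k\,\alpha_{kl}(\boldsymbol\mu)\,G_l+F_k\,\beta_{kl}(\boldsymbol\mu,\partial_x\boldsymbol\mu)\,G_l\Big)\mathrm dx,$$ with $\alpha_{kl}=(k+l)\mu_{k+l-1}$, $\beta_{kl}=k\,\partial_x\mu_{k+l-1}$, $k,l=1,\dots,N-2$ (summed), and $\mu_j=0$ for $j\ge N-1$. At points where $\mu_{N-2}\neq0$, the signature of this bracket is $(\lfloor N/2\rfloor,\lceil N/2\rceil)$ or $(\lceil N/2\rceil,\lfloor N/2\rfloor)$.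
   Context: Fields vanish at infinity with all derivatives; $F_\rho,F_\psi,F_k=\delta F/\delta\mu_k$ are functional derivatives. This bracket (Burby's closure of the one-dimensional Vlasov equation) is known to satisfy the Jacobi identity. A hydrodynamic bracket $\int(\partial_xF_n\alpha_{nm}G_m+F_n\beta_{nm}G_m)\mathrm dx$ is non-degenerate if $\alpha$ is invertible; a non-degenerate hydrodynamic Poisson bracket can be written, in suitable local coordinates $\boldsymbol\nu$, as $\int\partial_x\overline F_ng_{nm}\overline G_m\mathrm dx$ with $g$ constant symmetric non-degenerate (Dubrovin–Novikov), and its signature is the signature $(l,q)$ of $g$, $l$ the number of positive and $q$ the number of negative eigenvalues. *)

theory Defs
  imports "Jordan_Normal_Form.Char_Poly"
begin

definition n_pos_eig :: "real mat \<Rightarrow> nat" where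
  "n_pos_eig A = (\<Sum>a\<in>{a. a > 0 \<and> poly (char_poly A) a = 0}. order a (char_poly A))"

definition n_neg_eig :: "real mat \<Rightarrow> nat" where
  "n_neg_eig A = (\<Sum>a\<in>{a. a < 0 \<and> poly (char_poly A) a = 0}. order a (char_poly A))"

definition signature :: "real mat \<Rightarrow> nat \<times> nat" where
  "signature A = (n_pos_eig A, n_neg_eig A)"

text \<open>Field variables indexed 0 = rho, 1 = psi, k+1 = mu_k (k = 1..N-2).
  Leading-order coefficient matrix alpha of the bracket, written in the standard
  hydrodynamic form (integral of dF_n alpha_nm G_m + F_n beta_nm G_m).
  The term  - F_rho dG_psi  equals  dF_rho G_psi  after integration by parts, so
  alpha_{psi rho} = alpha_{rho psi} = 1; the mu-block is alpha_kl = (k+l) mu_{k+l-1},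
  with mu_j = 0 for j \<ge> N-1.  The beta terms do not contribute to alpha.
  mu :: nat => real gives the values mu_j at the point considered.\<close>

definition mu_trunc :: "nat \<Rightarrow> (nat \<Rightarrow> real) \<Rightarrow> nat \<Rightarrow> real" where
  "mu_trunc N mu j = (if 1 \<le> j \<and> j \<le> N - 2 then mu j else 0)"

definition burby_alpha :: "nat \<Rightarrow> (nat \<Rightarrow> real) \<Rightarrow> real mat" where
  "burby_alpha N mu = mat N N (\<lambda>(i, j).
     if (i = 0 \<and> j = 1) \<or> (i = 1 \<and> j = 0) then 1
     else if 2 \<le> i \<and> 2 \<le> j then
       (let k = i - 1; l = j - 1 in real (k + l) * mu_trunc N mu (k + l - 1))
     else 0)"

text \<open>Signature of the (non-degenerate) hydrodynamic bracket at the point: by Sylvester's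
  law of inertia the signature of the flat metric g in Dubrovin--Novikov coordinates equals
  the inertia of alpha at any point.\<close>

definition burby_bracket_signature :: "nat \<Rightarrow> (nat \<Rightarrow> real) \<Rightarrow> nat \<times> nat" where
  "burby_bracket_signature N mu = signature (burby_alpha N mu)"

end

(* The leading coefficient matrix alpha of the bracket is real symmetric, so by the spectral
   theorem its signature (p, q) counts the positive and negative entries of an orthogonal
   diagonalisation.  If mu_(N-2) is nonzero, alpha is nonsingular: its mu-block is zero below the
   anti-diagonal and equals (N - 1) mu_(N-2) on it.  Hence p + q = N.  The coordinates rho and
   mu_k with k >= N/2 span a totally isotropic subspace of dimension floor(N/2); it meets every
   positive or negative definite subspace trivially, so p and q are at most ceiling(N/2), which
   forces {p, q} = {floor(N/2), ceiling(N/2)}. *)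

theory Submission
  imports Defs
begin

section \<open>Roots of products of linear factors\<close>

lemma order_linear_factor: "order a [:- d, 1:] = (if a = d then 1 else (0::nat))"
  for a d :: real
proof (cases "a = d")
  case True
  then show ?thesis using order_power_n_n[of a 1] by simp
next
  case False
  then show ?thesis by (intro order_0I[THEN trans]) auto
qed

lemma order_prod_linear_factors:
  fixes d :: "nat \<Rightarrow> real"
  shows "order a (\<Prod>i<n. [:- d i, 1:]) = card {i. i < n \<and> d i = a}"
proof (induction n)
  case 0
  then show ?case by simp
next
  case (Suc n)
  have nonzero: "(\<Prod>i<n. [:- d i, 1:]) * [:- d n, 1:] \<noteq> 0"
    by (intro no_zero_divisors) (simp_all add: prod_zero_iff)
  have "{i. i < Suc n \<and> d i = a} = {i. i < n \<and> d i = a} \<union> (if d n = a then {n} else {})"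
    by (auto simp: less_Suc_eq)
  then have "card {i. i < Suc n \<and> d i = a} = card {i. i < n \<and> d i = a} + (if d n = a then 1 else 0)"
    by auto
  then show ?case
    using order_mult[OF nonzero] by (simp add: Suc.IH order_linear_factor)
qed

lemma sum_order_prod_linear_factors:
  fixes d :: "nat \<Rightarrow> real" and n :: nat
  defines "p \<equiv> \<Prod>i<n. [:- d i, 1:]"
  shows "(\<Sum>a\<in>{a. P a \<and> poly p a = 0}. order a p) = card {i. i < n \<and> P (d i)}"
proof -
  define I where "I = {i. i < n \<and> P (d i)}"
  have roots: "{a. P a \<and> poly p a = 0} = d ` I"
    unfolding p_def I_def by (auto simp: poly_prod prod_zero_iff)
  have "card I = (\<Sum>a\<in>d ` I. card {i\<in>I. d i = a})"
    using card_eq_sum sum.image_gen[of I "\<lambda>_. 1::nat" d] unfolding I_def by simp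
  also have "\<dots> = (\<Sum>a\<in>d ` I. order a p)"
  proof (intro sum.cong refl)
    fix a assume "a \<in> d ` I"
    then have "{i\<in>I. d i = a} = {i. i < n \<and> d i = a}" unfolding I_def by auto
    then show "card {i\<in>I. d i = a} = order a p" unfolding p_def order_prod_linear_factors by simp
  qed
  finally show ?thesis unfolding roots I_def by simp
qed

lemma dim_mat_diag [simp]: "dim_row (mat_diag n f) = n" "dim_col (mat_diag n f) = n"
  by (simp_all add: mat_diag_def)

lemma char_poly_mat_diag: "char_poly (mat_diag n d) = (\<Prod>i<n. [:- d i, 1:])"
proof -
  have "upper_triangular (mat_diag n d)" unfolding upper_triangular_def mat_diag_def by auto
  moreover have "diag_mat (mat_diag n d) = map d [0..<n]"
    unfolding diag_mat_def mat_diag_def by (intro nth_equalityI) auto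
  ultimately show ?thesis
    by (simp add: char_poly_upper_triangular[OF mat_diag_dim] prod.distinct_set_conv_list[symmetric]
        atLeast_upt comp_def)
qed

section \<open>Spectral theorem for real symmetric matrices\<close>

definition orthonormal_mat :: "nat \<Rightarrow> real mat \<Rightarrow> bool" where
  "orthonormal_mat n Q \<longleftrightarrow> Q \<in> carrier_mat n n \<and> transpose_mat Q * Q = 1\<^sub>m n"

lemma orthonormal_mat_right_inverse:
  assumes "orthonormal_mat n Q"
  shows "Q * transpose_mat Q = 1\<^sub>m n"
  using assms mat_mult_left_right_inverse[of "transpose_mat Q" n Q]
  unfolding orthonormal_mat_def by auto

lemma orthonormal_mat_mult:
  assumes P: "orthonormal_mat n P" and R: "orthonormal_mat n R"
  shows "orthonormal_mat n (P * R)"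
proof -
  have carrier: "P \<in> carrier_mat n n" "R \<in> carrier_mat n n"
    using P R unfolding orthonormal_mat_def by auto
  have "transpose_mat (P * R) * (P * R) = transpose_mat R * (transpose_mat P * P) * R"
    using carrier by (simp add: transpose_mult assoc_mult_mat[of _ n n _ n _ n])
  also have "\<dots> = 1\<^sub>m n" using P R carrier unfolding orthonormal_mat_def by simp
  finally show ?thesis using carrier unfolding orthonormal_mat_def by auto
qed

lemma orthonormal_mat_block_diag:
  assumes "orthonormal_mat m Q"
  shows "orthonormal_mat (Suc m) (four_block_mat (1\<^sub>m 1) (0\<^sub>m 1 m) (0\<^sub>m m 1) Q)"
proof -
  have Q: "Q \<in> carrier_mat m m" and QQ: "transpose_mat Q * Q = 1\<^sub>m m"
    using assms unfolding orthonormal_mat_def by auto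
  let ?Q1 = "four_block_mat (1\<^sub>m 1) (0\<^sub>m 1 m) (0\<^sub>m m 1) Q"
  have "transpose_mat ?Q1 = four_block_mat (1\<^sub>m 1) (0\<^sub>m 1 m) (0\<^sub>m m 1) (transpose_mat Q)"
    using transpose_four_block_mat[of "1\<^sub>m 1" 1 1 "0\<^sub>m 1 m" m "0\<^sub>m m 1" m Q] Q by simp
  also have "\<dots> * ?Q1 = four_block_mat (1\<^sub>m 1 * 1\<^sub>m 1 + 0\<^sub>m 1 m * 0\<^sub>m m 1) (1\<^sub>m 1 * 0\<^sub>m 1 m + 0\<^sub>m 1 m * Q)
      (0\<^sub>m m 1 * 1\<^sub>m 1 + transpose_mat Q * 0\<^sub>m m 1) (0\<^sub>m m 1 * 0\<^sub>m 1 m + transpose_mat Q * Q)"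
    by (rule mult_four_block_mat) (use Q in auto)
  finally have "transpose_mat ?Q1 * ?Q1 = four_block_mat (1\<^sub>m 1) (0\<^sub>m 1 m) (0\<^sub>m m 1) (1\<^sub>m m)"
    using Q QQ by simp
  moreover have "?Q1 \<in> carrier_mat (Suc m) (Suc m)"
    using four_block_carrier_mat[OF one_carrier_mat[of 1] Q] by simp
  ultimately show ?thesis unfolding orthonormal_mat_def by simp
qed

lemma mat_diag_Suc_block:
  "mat_diag (Suc m) (case_nat c d) = four_block_mat (mat_diag 1 (\<lambda>_. c)) (0\<^sub>m 1 m) (0\<^sub>m m 1) (mat_diag m d)"
  by (rule eq_matI) (auto simp: mat_diag_def split: nat.split)

lemma orthogonal_diagonalization_block_diag:
  fixes Q :: "real mat"
  assumes Q: "Q \<in> carrier_mat m m"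
  defines "Q1 \<equiv> four_block_mat (1\<^sub>m 1) (0\<^sub>m 1 m) (0\<^sub>m m 1) Q"
  shows "four_block_mat (mat_diag 1 (\<lambda>_. c)) (0\<^sub>m 1 m) (0\<^sub>m m 1) (Q * mat_diag m d * transpose_mat Q)
    = Q1 * mat_diag (Suc m) (case_nat c d) * transpose_mat Q1"
proof -
  let ?D1 = "mat_diag 1 (\<lambda>_. c)"
  have "Q1 * mat_diag (Suc m) (case_nat c d)
      = four_block_mat (1\<^sub>m 1 * ?D1 + 0\<^sub>m 1 m * 0\<^sub>m m 1) (1\<^sub>m 1 * 0\<^sub>m 1 m + 0\<^sub>m 1 m * mat_diag m d)
          (0\<^sub>m m 1 * ?D1 + Q * 0\<^sub>m m 1) (0\<^sub>m m 1 * 0\<^sub>m 1 m + Q * mat_diag m d)"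
    unfolding Q1_def mat_diag_Suc_block by (rule mult_four_block_mat) (use Q in auto)
  also have "\<dots> = four_block_mat ?D1 (0\<^sub>m 1 m) (0\<^sub>m m 1) (Q * mat_diag m d)"
    using Q by simp
  finally have left: "Q1 * mat_diag (Suc m) (case_nat c d) = \<dots>" .
  have right: "transpose_mat Q1 = four_block_mat (1\<^sub>m 1) (0\<^sub>m 1 m) (0\<^sub>m m 1) (transpose_mat Q)"
    unfolding Q1_def
    using transpose_four_block_mat[of "1\<^sub>m 1" 1 1 "0\<^sub>m 1 m" m "0\<^sub>m m 1" m Q] Q by simp
  have "four_block_mat ?D1 (0\<^sub>m 1 m) (0\<^sub>m m 1) (Q * mat_diag m d) * transpose_mat Q1
      = four_block_mat (?D1 * 1\<^sub>m 1 + 0\<^sub>m 1 m * 0\<^sub>m m 1) (?D1 * 0\<^sub>m 1 m + 0\<^sub>m 1 m * transpose_mat Q)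
          (0\<^sub>m m 1 * 1\<^sub>m 1 + Q * mat_diag m d * 0\<^sub>m m 1) (0\<^sub>m m 1 * 0\<^sub>m 1 m + Q * mat_diag m d * transpose_mat Q)"
    unfolding right by (rule mult_four_block_mat) (use Q in auto)
  also have "\<dots> = four_block_mat ?D1 (0\<^sub>m 1 m) (0\<^sub>m m 1) (Q * mat_diag m d * transpose_mat Q)"
    using Q left_add_zero_mat[of "Q * mat_diag m d * transpose_mat Q" m m]
    by (simp add: mult_carrier_mat[of _ m m _ m])
  finally show ?thesis unfolding left by simp
qed

lemma symmetric_mat_has_real_eigenvector:
  fixes A :: "real mat"
  assumes A: "A \<in> carrier_mat n n" and n: "n > 0" and sym: "transpose_mat A = A"
  shows "\<exists>l v. v \<in> carrier_vec n \<and> v \<noteq> 0\<^sub>v n \<and> A *\<^sub>v v = l \<cdot>\<^sub>v v"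
proof -
  let ?Ac = "map_mat complex_of_real A"
  have Ac: "?Ac \<in> carrier_mat n n" using A by auto
  obtain zs where zs: "char_poly ?Ac = (\<Prod>z\<leftarrow>zs. [:- z, 1:])" "length zs = n"
    using char_poly_factorized[OF Ac] by blast
  then obtain z where "z \<in> set zs" using n by (cases zs) auto
  then have root: "poly (char_poly ?Ac) z = 0"
    unfolding zs(1) poly_prod_list prod_list_zero_iff by auto
  then obtain w where w: "w \<in> carrier_vec n" "w \<noteq> 0\<^sub>v n" "?Ac *\<^sub>v w = z \<cdot>\<^sub>v w"
    using eigenvalue_root_char_poly[OF Ac] Ac unfolding eigenvalue_def eigenvector_def by auto
  \<comment> \<open>The Hermitian form \<open>w\<^sup>* A w = z \<parallel>w\<parallel>\<^sup>2\<close> is real, hence so is \<open>z\<close>.\<close>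
  define s where "s = (\<Sum>i<n. \<Sum>j<n. cnj (w$i) * ?Ac $$ (i,j) * w$j)"
  define r where "r = (\<Sum>i<n. (cmod (w$i))\<^sup>2)"
  have "s = (\<Sum>i<n. cnj (w$i) * (?Ac *\<^sub>v w)$i)"
    unfolding s_def using Ac w(1)
    by (auto simp: scalar_prod_def sum_distrib_left atLeast0LessThan ac_simps intro!: sum.cong)
  also have "\<dots> = z * r"
  proof -
    have "cnj a * (z * a) = z * complex_of_real ((cmod a)\<^sup>2)" for a
      by (subst complex_norm_square) (simp add: ac_simps)
    then have "cnj (w$i) * (z \<cdot>\<^sub>v w)$i = z * complex_of_real ((cmod (w$i))\<^sup>2)" if "i < n" for i
      using that w(1) by simp
    then show ?thesis unfolding w(3) r_def of_real_sum sum_distrib_left by (intro sum.cong) auto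
  qed
  finally have s_eq: "s = z * complex_of_real r" .
  have "cnj s = (\<Sum>j<n. \<Sum>i<n. w$i * ?Ac $$ (i,j) * cnj (w$j))"
    unfolding s_def using A by (subst sum.swap) (simp add: ac_simps)
  also have "\<dots> = s"
  proof -
    have "A $$ (j,i) = A $$ (i,j)" if "i < n" "j < n" for i j
      using arg_cong[OF sym, of "\<lambda>B. B $$ (i,j)"] A that by auto
    then show ?thesis unfolding s_def using A by (intro sum.cong refl) (auto simp: ac_simps)
  qed
  finally have "cnj s = s" .
  moreover have "r \<noteq> 0"
  proof
    assume "r = 0"
    then have "\<forall>i\<in>{..<n}. (cmod (w$i))\<^sup>2 = 0"
      unfolding r_def by (subst (asm) sum_nonneg_eq_0_iff) auto
    then have "w = 0\<^sub>v n" using w(1) by (intro eq_vecI) auto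
    then show False using w(2) by simp
  qed
  ultimately have "cnj z = z"
    using s_eq by (metis complex_cnj_complex_of_real complex_cnj_mult mult_cancel_right of_real_eq_0_iff)
  then have z_real: "z = complex_of_real (Re z)" using Reals_cnj_iff of_real_Re by metis
  have "complex_of_real (poly (char_poly A) (Re z)) = poly (char_poly ?Ac) z"
    by (subst z_real) (simp add: of_real_hom.char_poly_hom[OF A] of_real_hom.poly_map_poly)
  then have "eigenvalue A (Re z)"
    using root eigenvalue_root_char_poly[OF A] by simp
  then show ?thesis unfolding eigenvalue_def eigenvector_def using A by auto
qed

lemma exists_symmetric_orthonormal_mat_first_col:
  fixes v :: "real vec"
  assumes v: "v \<in> carrier_vec n" and n: "n > 0" and unit: "v \<bullet> v = 1"
  shows "\<exists>H. orthonormal_mat n H \<and> transpose_mat H = H \<and> col H 0 = v"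
proof -
  \<comment> \<open>The reflection in the hyperplane orthogonal to \<open>u = v - e\<^sub>0\<close>;
    if \<open>u = 0\<close> then \<open>c = 2 / 0 = 0\<close> and \<open>H = 1\<close>.\<close>
  define u where "u i = v$i - (if i = 0 then 1 else 0)" for i
  define s where "s = (\<Sum>k<n. u k * u k)"
  define c where "c = 2 / s"
  define H where "H = mat n n (\<lambda>(i,j). (if i = j then 1 else 0) - c * u i * u j)"
  have H: "H \<in> carrier_mat n n" unfolding H_def by auto
  have HT: "transpose_mat H = H" unfolding H_def by (intro eq_matI) auto
  have cs: "c * c * s = 2 * c" unfolding c_def by (cases "s = 0") (auto simp: field_simps)
  have HH: "H * H = 1\<^sub>m n"
  proof (intro eq_matI)
    fix i j assume "i < dim_row (1\<^sub>m n)" "j < dim_col (1\<^sub>m n)"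
    then have i: "i < n" and j: "j < n" by auto
    have "(H * H) $$ (i,j) = (\<Sum>k<n. ((if i = k then 1 else 0) - c*u i*u k) * ((if k = j then 1 else 0) - c*u k*u j))"
      using H i j by (auto simp: scalar_prod_def H_def atLeast0LessThan intro!: sum.cong)
    also have "\<dots> = (\<Sum>k<n. (if i = k then (if k = j then 1 else 0) else 0)
         - (if k = j then c*u i*u k else 0) - (if i = k then c*u k*u j else 0) + c*c*u i*u j*(u k*u k))"
      by (intro sum.cong refl) (auto simp: algebra_simps)
    also have "\<dots> = (if i = j then 1 else 0) - 2*c*(u i*u j) + (c*c*s)*(u i*u j)"
      unfolding sum.distrib sum_subtractf s_def sum_distrib_left[symmetric]
      using i j by (simp add: algebra_simps)
    also have "\<dots> = 1\<^sub>m n $$ (i,j)" unfolding cs using i j by simp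
    finally show "(H * H) $$ (i,j) = 1\<^sub>m n $$ (i,j)" .
  qed (use H in auto)
  have s_eq: "s = 2 - 2 * v$0"
  proof -
    have "(\<Sum>k<n. v$k * v$k) = 1" using unit v by (simp add: scalar_prod_def atLeast0LessThan)
    moreover have "s = (\<Sum>k<n. v$k * v$k - (if k = 0 then 2 * v$k else 0) + (if k = 0 then 1 else 0))"
      unfolding s_def u_def by (intro sum.cong refl) (auto simp: algebra_simps)
    ultimately show ?thesis unfolding sum.distrib sum_subtractf using n by simp
  qed
  have "col H 0 = v"
  proof (intro eq_vecI)
    fix i assume "i < dim_vec v"
    then have i: "i < n" using v by auto
    show "col H 0 $ i = v $ i"
    proof (cases "v$0 = 1")
      case True
      then have "s = 0" using s_eq by simp
      then have "u i * u i = 0" using i unfolding s_def by (subst (asm) sum_nonneg_eq_0_iff) auto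
      then show ?thesis using i n H unfolding H_def u_def by (auto split: if_splits)
    next
      case False
      then have "c * u 0 = -1" unfolding c_def s_eq u_def by (auto simp: field_simps)
      then have "c * u i * u 0 = - u i" by (metis mult.commute mult_minus1_right mult.left_commute)
      then show ?thesis using i n H unfolding H_def u_def by (auto simp: algebra_simps)
    qed
  qed (use H v in auto)
  then show ?thesis using H HT HH unfolding orthonormal_mat_def by auto
qed

lemma symmetric_mat_has_unit_eigenvector:
  fixes A :: "real mat"
  assumes A: "A \<in> carrier_mat n n" and n: "n > 0" and sym: "transpose_mat A = A"
  shows "\<exists>l v. v \<in> carrier_vec n \<and> v \<bullet> v = 1 \<and> A *\<^sub>v v = l \<cdot>\<^sub>v v"
proof -
  obtain l w where w: "w \<in> carrier_vec n" "w \<noteq> 0\<^sub>v n" "A *\<^sub>v w = l \<cdot>\<^sub>v w"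
    using symmetric_mat_has_real_eigenvector[OF A n sym] by auto
  have "w \<bullet> w = (\<Sum>k<n. (w$k)\<^sup>2)"
    using w(1) by (simp add: scalar_prod_def atLeast0LessThan power2_eq_square)
  moreover have "(\<Sum>k<n. (w$k)\<^sup>2) \<noteq> 0"
  proof
    assume "(\<Sum>k<n. (w$k)\<^sup>2) = 0"
    then have "\<forall>k\<in>{..<n}. (w$k)\<^sup>2 = 0" by (subst (asm) sum_nonneg_eq_0_iff) auto
    then have "w = 0\<^sub>v n" using w(1) by (intro eq_vecI) auto
    then show False using w(2) by simp
  qed
  ultimately have "w \<bullet> w > 0" by (metis sum_nonneg zero_le_power2 order_le_less)
  define v where "v = (1 / sqrt (w \<bullet> w)) \<cdot>\<^sub>v w"
  have "v \<in> carrier_vec n" unfolding v_def using w(1) by auto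
  moreover have "v \<bullet> v = 1" unfolding v_def using w(1) \<open>w \<bullet> w > 0\<close>
    by (simp add: smult_scalar_prod_distrib scalar_prod_smult_distrib[OF w(1)] real_sqrt_mult[symmetric])
  moreover have "A *\<^sub>v v = l \<cdot>\<^sub>v v"
    unfolding v_def using mult_mat_vec[OF A w(1)] w(3) by (simp add: smult_smult_assoc mult.commute)
  ultimately show ?thesis by blast
qed

lemma reflection_conj_first_col:
  fixes A H :: "real mat"
  assumes n: "n > 0" and A: "A \<in> carrier_mat n n" and sym: "transpose_mat A = A"
    and H: "orthonormal_mat n H" "transpose_mat H = H" "col H 0 = v"
    and v: "v \<in> carrier_vec n" and Av: "A *\<^sub>v v = l \<cdot>\<^sub>v v"
  shows "transpose_mat (H * A * H) = H * A * H" and "col (H * A * H) 0 = l \<cdot>\<^sub>v unit_vec n 0"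
proof -
  have Hc: "H \<in> carrier_mat n n" and HH: "H * H = 1\<^sub>m n"
    using H unfolding orthonormal_mat_def by auto
  have "transpose_mat (H * A * H) = transpose_mat H * (transpose_mat A * transpose_mat H)"
    unfolding transpose_mult[OF mult_carrier_mat[OF Hc A] Hc] transpose_mult[OF Hc A] ..
  also have "\<dots> = H * A * H"
    unfolding sym H(2) using Hc A by (simp add: assoc_mult_mat[of _ n n])
  finally show "transpose_mat (H * A * H) = H * A * H" .
  have "col (H * A * H) 0 = H *\<^sub>v (A *\<^sub>v col H 0)"
    using Hc A v H(3) n
    by (subst col_mult2[of _ n n]) (auto intro!: assoc_mult_mat_vec)
  also have "\<dots> = l \<cdot>\<^sub>v col (H * H) 0"
    unfolding H(3) Av mult_mat_vec[OF Hc v] using Hc n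
    by (subst col_mult2[of _ n n]) (auto simp: H(3))
  finally show "col (H * A * H) 0 = l \<cdot>\<^sub>v unit_vec n 0" unfolding HH using n by simp
qed

lemma symmetric_mat_first_col_block:
  fixes B :: "real mat"
  assumes B: "B \<in> carrier_mat (Suc m) (Suc m)" and sym: "transpose_mat B = B"
    and col0: "col B 0 = l \<cdot>\<^sub>v unit_vec (Suc m) 0"
  shows "B = four_block_mat (mat_diag 1 (\<lambda>_. l)) (0\<^sub>m 1 m) (0\<^sub>m m 1)
    (mat m m (\<lambda>(i,j). B $$ (Suc i, Suc j)))" (is "B = ?M")
proof (rule eq_matI)
  fix i j assume "i < dim_row ?M" "j < dim_col ?M"
  then have i: "i < Suc m" and j: "j < Suc m" by auto
  have first_col: "B $$ (k,0) = (if k = 0 then l else 0)" if "k < Suc m" for k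
    using arg_cong[OF col0, of "\<lambda>x. x $ k"] that B by auto
  have "B $$ (0,j) = B $$ (j,0)" using arg_cong[OF sym, of "\<lambda>X. X $$ (0,j)"] B j by auto
  then show "B $$ (i,j) = ?M $$ (i,j)"
    using first_col i j by (cases i; cases j) (auto simp: mat_diag_def)
qed (use B in auto)

theorem symmetric_mat_orthogonal_diagonalization:
  fixes A :: "real mat"
  assumes "A \<in> carrier_mat n n" and "transpose_mat A = A"
  shows "\<exists>Q d. orthonormal_mat n Q \<and> A = Q * mat_diag n d * transpose_mat Q"
  using assms
proof (induction n arbitrary: A)
  case 0
  then have "A = 1\<^sub>m 0 * mat_diag 0 (\<lambda>_. 0) * transpose_mat (1\<^sub>m 0)" by (auto intro!: eq_matI)
  moreover have "orthonormal_mat 0 (1\<^sub>m 0)" unfolding orthonormal_mat_def by simp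
  ultimately show ?case by blast
next
  case (Suc m A)
  note A = Suc.prems(1) and sym = Suc.prems(2)
  obtain l v where v: "v \<in> carrier_vec (Suc m)" "v \<bullet> v = 1" and Av: "A *\<^sub>v v = l \<cdot>\<^sub>v v"
    using symmetric_mat_has_unit_eigenvector[OF A _ sym] by auto
  then obtain H where H: "orthonormal_mat (Suc m) H" "transpose_mat H = H" "col H 0 = v"
    using exists_symmetric_orthonormal_mat_first_col[OF v(1)] by auto
  have Hc: "H \<in> carrier_mat (Suc m) (Suc m)" and HH: "H * H = 1\<^sub>m (Suc m)"
    using H unfolding orthonormal_mat_def by auto
  define B where "B = H * A * H"
  have B: "B \<in> carrier_mat (Suc m) (Suc m)" unfolding B_def using Hc A by auto
  have B_sym: "transpose_mat B = B" and B_col: "col B 0 = l \<cdot>\<^sub>v unit_vec (Suc m) 0"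
    unfolding B_def using reflection_conj_first_col[OF _ A sym H v(1) Av] by auto
  define B' where "B' = mat m m (\<lambda>(i,j). B $$ (Suc i, Suc j))"
  have B_block: "B = four_block_mat (mat_diag 1 (\<lambda>_. l)) (0\<^sub>m 1 m) (0\<^sub>m m 1) B'"
    unfolding B'_def by (rule symmetric_mat_first_col_block[OF B B_sym B_col])
  have "B $$ (Suc j, Suc i) = B $$ (Suc i, Suc j)" if "i < m" "j < m" for i j
    using arg_cong[OF B_sym, of "\<lambda>X. X $$ (Suc i, Suc j)"] B that by auto
  then have "transpose_mat B' = B'" unfolding B'_def by (intro eq_matI) auto
  then obtain Q' d' where Q': "orthonormal_mat m Q'" and B': "B' = Q' * mat_diag m d' * transpose_mat Q'"
    using Suc.IH[of B'] unfolding B'_def by auto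
  define Q1 where "Q1 = four_block_mat (1\<^sub>m 1) (0\<^sub>m 1 m) (0\<^sub>m m 1) Q'"
  have Q1: "orthonormal_mat (Suc m) Q1" unfolding Q1_def by (rule orthonormal_mat_block_diag[OF Q'])
  have B_diag: "B = Q1 * mat_diag (Suc m) (case_nat l d') * transpose_mat Q1"
    unfolding B_block B' Q1_def
    by (rule orthogonal_diagonalization_block_diag) (use Q' in \<open>auto simp: orthonormal_mat_def\<close>)
  have Q1c: "Q1 \<in> carrier_mat (Suc m) (Suc m)" using Q1 unfolding orthonormal_mat_def by auto
  have "A = (H * H) * A * (H * H)" unfolding HH using A by simp
  also have "\<dots> = H * B * H"
    unfolding B_def using Hc A by (simp add: assoc_mult_mat[of _ "Suc m" "Suc m" _ "Suc m" _ "Suc m"])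
  also have "\<dots> = (H * Q1) * mat_diag (Suc m) (case_nat l d') * transpose_mat (H * Q1)"
    unfolding B_diag using Hc Q1c H(2)
    by (simp add: transpose_mult[OF Hc Q1c] assoc_mult_mat[of _ "Suc m" "Suc m" _ "Suc m" _ "Suc m"]
        mult_carrier_mat[of _ "Suc m" "Suc m"])
  finally show ?case using orthonormal_mat_mult[OF H(1) Q1] by blast
qed

section \<open>Inertia and isotropic coordinate subspaces\<close>

lemma char_poly_orthogonal_diagonalization:
  assumes Q: "orthonormal_mat n Q" and A: "A = Q * mat_diag n d * transpose_mat Q"
  shows "char_poly A = (\<Prod>i<n. [:- d i, 1:])"
proof -
  have "similar_mat A (mat_diag n d)"
    using Q A orthonormal_mat_right_inverse[OF Q] unfolding orthonormal_mat_def
    by (intro similar_matI[of _ _ Q "transpose_mat Q" n]) auto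
  then show ?thesis using char_poly_similar char_poly_mat_diag by metis
qed

lemma signature_orthogonal_diagonalization:
  assumes "orthonormal_mat n Q" and "A = Q * mat_diag n d * transpose_mat Q"
  shows "signature A = (card {i. i < n \<and> d i > 0}, card {i. i < n \<and> d i < 0})"
  unfolding signature_def n_pos_eig_def n_neg_eig_def char_poly_orthogonal_diagonalization[OF assms]
  using sum_order_prod_linear_factors[where P = "\<lambda>a. a > 0"]
    sum_order_prod_linear_factors[where P = "\<lambda>a. a < 0"]
  by simp

lemma quadratic_form_orthogonal_diagonalization:
  assumes Q: "orthonormal_mat n Q" and A: "A = Q * mat_diag n d * transpose_mat Q"
    and w: "w \<in> carrier_vec n"
  shows "w \<bullet> (A *\<^sub>v w) = (\<Sum>i<n. d i * ((transpose_mat Q *\<^sub>v w) $ i)\<^sup>2)"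
proof -
  define c where "c = transpose_mat Q *\<^sub>v w"
  have Qc: "Q \<in> carrier_mat n n" using Q unfolding orthonormal_mat_def by auto
  have c: "c \<in> carrier_vec n" unfolding c_def using Qc w by auto
  have "A *\<^sub>v w = Q *\<^sub>v (mat_diag n d *\<^sub>v c)"
    unfolding A c_def using Qc w
    by (simp add: assoc_mult_mat_vec[of _ n n _ n] mult_carrier_mat[of _ n n])
  then have "w \<bullet> (A *\<^sub>v w) = w \<bullet> (Q *\<^sub>v (mat_diag n d *\<^sub>v c))" by simp
  also have "\<dots> = c \<bullet> (mat_diag n d *\<^sub>v c)"
    unfolding c_def
    by (rule transpose_vec_mult_scalar[symmetric, OF Qc mult_mat_vec_carrier[OF mat_diag_dim] w])
      (use c c_def in simp)
  also have "\<dots> = (\<Sum>i<n. d i * (c $ i)\<^sup>2)"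
  proof -
    have "(mat_diag n d *\<^sub>v c) $ i = d i * c $ i" if "i < n" for i
    proof -
      have "(mat_diag n d *\<^sub>v c) $ i = (\<Sum>k<n. (if i = k then d i else 0) * c $ k)"
        using that c by (auto simp: mat_diag_def scalar_prod_def atLeast0LessThan intro!: sum.cong)
      also have "\<dots> = (\<Sum>k<n. if k = i then d i * c $ k else 0)" by (intro sum.cong) auto
      finally show ?thesis using that by simp
    qed
    then show ?thesis
      using c by (auto simp: scalar_prod_def atLeast0LessThan power2_eq_square intro!: sum.cong)
  qed
  finally show ?thesis unfolding c_def .
qed

lemma exists_nonzero_vec_orthogonal:
  fixes V :: "'a :: field vec set"
  assumes "finite V" and V: "V \<subseteq> carrier_vec n" and card: "card V < n"
  shows "\<exists>w. w \<in> carrier_vec n \<and> w \<noteq> 0\<^sub>v n \<and> (\<forall>x\<in>V. x \<bullet> w = 0)"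
proof -
  obtain xs where xs: "set xs = V" "distinct xs" using finite_distinct_list[OF \<open>finite V\<close>] by blast
  have len: "length xs < n" using card xs distinct_card by fastforce
  define c where "c i = (if i < length xs then xs ! i else 0\<^sub>v n)" for i
  define M where "M = mat\<^sub>r n n (\<lambda>i. if i = n - 1 then 0\<^sub>v n else c i)"
  have M: "M \<in> carrier_mat n n" unfolding M_def by auto
  have "c \<in> {0..<n} \<rightarrow> carrier_vec n" unfolding c_def using V xs nth_mem by fastforce
  then have "det M = 0" unfolding M_def by (intro det_row_0) (use len in auto)
  then obtain w where w: "w \<in> carrier_vec n" "w \<noteq> 0\<^sub>v n" "M *\<^sub>v w = 0\<^sub>v n"
    using det_0_iff_vec_prod_zero_field[OF M] by auto
  have "x \<bullet> w = 0" if "x \<in> V" for x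
  proof -
    obtain i where i: "i < length xs" "x = xs ! i" using \<open>x \<in> V\<close> xs(1) by (metis in_set_conv_nth)
    have "x \<in> carrier_vec n" using \<open>x \<in> V\<close> V by auto
    then have "row M i = x" unfolding M_def c_def using i len by (subst row_mat_of_row_fun) auto
    then show ?thesis using arg_cong[OF w(3), of "\<lambda>y. y $ i"] i len M by auto
  qed
  then show ?thesis using w by blast
qed

lemma quadratic_form_isotropic:
  fixes A :: "'a :: comm_ring mat"
  assumes A: "A \<in> carrier_mat n n" and w: "w \<in> carrier_vec n"
    and iso: "\<And>i j. i \<in> S \<Longrightarrow> j \<in> S \<Longrightarrow> A $$ (i,j) = 0"
    and supp: "\<And>j. j < n \<Longrightarrow> j \<notin> S \<Longrightarrow> w $ j = 0"
  shows "w \<bullet> (A *\<^sub>v w) = 0"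
proof -
  have "w $ i * (A $$ (i,j) * w $ j) = 0" if "i < n" "j < n" for i j
    using iso[of i j] supp[of i] supp[of j] that by (cases "i \<in> S"; cases "j \<in> S") auto
  then show ?thesis
    using A w by (auto simp: scalar_prod_def sum_distrib_left atLeast0LessThan intro!: sum.neutral)
qed

lemma quadratic_form_pos_on_positive_eigenspace:
  assumes Q: "orthonormal_mat n Q" and A: "A = Q * mat_diag n d * transpose_mat Q"
    and w: "w \<in> carrier_vec n" "w \<noteq> 0\<^sub>v n"
    and supp: "\<And>i. i < n \<Longrightarrow> d i \<le> 0 \<Longrightarrow> (transpose_mat Q *\<^sub>v w) $ i = 0"
  shows "w \<bullet> (A *\<^sub>v w) > 0"
proof -
  define c where "c = transpose_mat Q *\<^sub>v w"
  have Qc: "Q \<in> carrier_mat n n" using Q unfolding orthonormal_mat_def by auto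
  have c: "c \<in> carrier_vec n" unfolding c_def using Qc w by auto
  have "Q *\<^sub>v c = w"
    unfolding c_def using Qc w orthonormal_mat_right_inverse[OF Q]
    by (simp add: assoc_mult_mat_vec[of _ n n _ n, symmetric])
  then have "c \<noteq> 0\<^sub>v n" using w Qc by auto
  then obtain i0 where i0: "i0 < n" "c $ i0 \<noteq> 0" using c by (metis eq_vecI carrier_vecD index_zero_vec)
  then have "d i0 > 0" using supp unfolding c_def by force
  have nonneg: "d i * (c $ i)\<^sup>2 \<ge> 0" if "i < n" for i
    using supp[OF that] unfolding c_def by (cases "d i > 0") auto
  have "0 < d i0 * (c $ i0)\<^sup>2" using i0 \<open>d i0 > 0\<close> by simp
  also have "\<dots> \<le> (\<Sum>i<n. d i * (c $ i)\<^sup>2)"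
    by (rule member_le_sum) (use nonneg i0 in auto)
  also have "\<dots> = w \<bullet> (A *\<^sub>v w)"
    unfolding c_def by (rule quadratic_form_orthogonal_diagonalization[OF Q A w(1), symmetric])
  finally show ?thesis .
qed

lemma card_pos_plus_card_isotropic_le:
  assumes Q: "orthonormal_mat n Q" and A: "A = Q * mat_diag n d * transpose_mat Q"
    and S: "S \<subseteq> {..<n}" and iso: "\<And>i j. i \<in> S \<Longrightarrow> j \<in> S \<Longrightarrow> A $$ (i,j) = 0"
  shows "card {i. i < n \<and> d i > 0} + card S \<le> n"
proof (rule ccontr)
  define P where "P = {i. i < n \<and> d i > 0}"
  assume "\<not> card {i. i < n \<and> d i > 0} + card S \<le> n"
  then have big: "card P + card S > n" unfolding P_def by simp
  have P: "P \<subseteq> {..<n}" unfolding P_def by auto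
  have Qc: "Q \<in> carrier_mat n n" using Q unfolding orthonormal_mat_def by auto
  have Ac: "A \<in> carrier_mat n n" unfolding A using Qc by auto
  \<comment> \<open>A nonzero \<open>w \<bottom> V\<close> is supported on \<open>S\<close> and lies in the span of the eigenvectors
    \<open>col Q i\<close> with \<open>d i > 0\<close>, so its quadratic form is both zero and positive.\<close>
  define V where "V = unit_vec n ` ({..<n} - S) \<union> col Q ` ({..<n} - P)"
  have "card V \<le> card ({..<n} - S) + card ({..<n} - P)"
    unfolding V_def by (rule order_trans[OF card_Un_le add_mono[OF card_image_le card_image_le]]) auto
  also have "\<dots> = (n - card S) + (n - card P)"
    using S P by (simp add: card_Diff_subset finite_subset)
  finally have "card V < n"
    using big card_mono[OF _ S] card_mono[OF _ P] by simp
  moreover have "V \<subseteq> carrier_vec n" unfolding V_def using Qc by auto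
  ultimately obtain w where w: "w \<in> carrier_vec n" "w \<noteq> 0\<^sub>v n" and orth: "\<forall>x\<in>V. x \<bullet> w = 0"
    using exists_nonzero_vec_orthogonal[of V n] unfolding V_def by auto
  have "w $ j = 0" if "j < n" "j \<notin> S" for j
    using orth w(1) that scalar_prod_left_unit[OF w(1) \<open>j < n\<close>] unfolding V_def by auto
  then have "w \<bullet> (A *\<^sub>v w) = 0" by (intro quadratic_form_isotropic[OF Ac w(1) iso]) auto
  moreover have "(transpose_mat Q *\<^sub>v w) $ i = 0" if "i < n" "d i \<le> 0" for i
    using orth Qc w(1) that unfolding V_def P_def by auto
  then have "w \<bullet> (A *\<^sub>v w) > 0" by (rule quadratic_form_pos_on_positive_eigenspace[OF Q A w])
  ultimately show False by simp
qed

lemma orthogonal_diagonalization_eigenvector: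
  assumes Q: "orthonormal_mat n Q" and A: "A = Q * mat_diag n d * transpose_mat Q" and i: "i < n"
  shows "A *\<^sub>v col Q i = d i \<cdot>\<^sub>v col Q i"
proof -
  have Qc: "Q \<in> carrier_mat n n" using Q unfolding orthonormal_mat_def by auto
  have "A * Q = Q * mat_diag n d * (transpose_mat Q * Q)"
    unfolding A using Qc by (simp add: assoc_mult_mat[of _ n n _ n _ n] mult_carrier_mat[of _ n n])
  also have "\<dots> = Q * mat_diag n d" using Q Qc unfolding orthonormal_mat_def by simp
  finally have "A *\<^sub>v col Q i = col (Q * mat_diag n d) i"
    using col_mult2[of A n n Q n i] Qc i A by (simp add: mult_carrier_mat[of _ n n])
  also have "\<dots> = d i \<cdot>\<^sub>v col Q i"
    by (rule eq_vecI) (use Qc i in \<open>auto simp: mat_diag_mult_right[OF Qc]\<close>)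
  finally show ?thesis .
qed

lemma orthogonal_diagonalization_nonsingular:
  assumes Q: "orthonormal_mat n Q" and A: "A = Q * mat_diag n d * transpose_mat Q"
    and ker: "\<And>x. x \<in> carrier_vec n \<Longrightarrow> A *\<^sub>v x = 0\<^sub>v n \<Longrightarrow> x = 0\<^sub>v n" and i: "i < n"
  shows "d i \<noteq> 0"
proof
  assume "d i = 0"
  have Qc: "Q \<in> carrier_mat n n" using Q unfolding orthonormal_mat_def by auto
  then have "A *\<^sub>v col Q i = 0\<^sub>v n"
    using orthogonal_diagonalization_eigenvector[OF Q A i] \<open>d i = 0\<close> i by auto
  then have "col Q i = 0\<^sub>v n" using ker Qc i by auto
  moreover have "(transpose_mat Q * Q) $$ (i,i) = 1" using Q i unfolding orthonormal_mat_def by simp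
  then have "col Q i \<bullet> col Q i = 1" using Qc i by (simp add: index_mult_mat(1))
  ultimately show False using Qc by simp
qed

lemma n_pos_eig_plus_n_neg_eig:
  fixes A :: "real mat"
  assumes A: "A \<in> carrier_mat n n" "transpose_mat A = A"
    and ker: "\<And>x. x \<in> carrier_vec n \<Longrightarrow> A *\<^sub>v x = 0\<^sub>v n \<Longrightarrow> x = 0\<^sub>v n"
  shows "n_pos_eig A + n_neg_eig A = n"
proof -
  obtain Q d where Q: "orthonormal_mat n Q" and AQ: "A = Q * mat_diag n d * transpose_mat Q"
    using symmetric_mat_orthogonal_diagonalization[OF A] by blast
  have "{i. i < n \<and> d i > 0} \<union> {i. i < n \<and> d i < 0} = {..<n}"
    using orthogonal_diagonalization_nonsingular[OF Q AQ ker] by (auto simp: neq_iff)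
  moreover have "card ({i. i < n \<and> d i > 0} \<union> {i. i < n \<and> d i < 0})
      = card {i. i < n \<and> d i > 0} + card {i. i < n \<and> d i < 0}"
    by (rule card_Un_disjoint) auto
  ultimately have "card {i. i < n \<and> d i > 0} + card {i. i < n \<and> d i < 0} = n" by simp
  then show ?thesis using signature_orthogonal_diagonalization[OF Q AQ] by (simp add: signature_def)
qed

lemma signature_isotropic_bound:
  fixes A :: "real mat"
  assumes A: "A \<in> carrier_mat n n" "transpose_mat A = A"
    and S: "S \<subseteq> {..<n}" and iso: "\<And>i j. i \<in> S \<Longrightarrow> j \<in> S \<Longrightarrow> A $$ (i,j) = 0"
  shows "n_pos_eig A + card S \<le> n" and "n_neg_eig A + card S \<le> n"
proof -
  obtain Q d where Q: "orthonormal_mat n Q" and AQ: "A = Q * mat_diag n d * transpose_mat Q"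
    using symmetric_mat_orthogonal_diagonalization[OF A] by blast
  have sig: "n_pos_eig A = card {i. i < n \<and> d i > 0}" "n_neg_eig A = card {i. i < n \<and> d i < 0}"
    using signature_orthogonal_diagonalization[OF Q AQ] by (simp_all add: signature_def)
  show "n_pos_eig A + card S \<le> n"
    unfolding sig by (rule card_pos_plus_card_isotropic_le[OF Q AQ S iso])
  have "mat_diag n (\<lambda>i. - d i) = - mat_diag n d" by (rule eq_matI) (auto simp: mat_diag_def)
  moreover have "Q \<in> carrier_mat n n" using Q unfolding orthonormal_mat_def by auto
  ultimately have "- A = Q * mat_diag n (\<lambda>i. - d i) * transpose_mat Q" unfolding AQ by simp
  moreover have "(- A) $$ (i,j) = 0" if "i \<in> S" "j \<in> S" for i j
    using iso[OF that] S that A(1) by (auto simp: subset_eq)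
  ultimately have "card {i. i < n \<and> - d i > 0} + card S \<le> n"
    by (intro card_pos_plus_card_isotropic_le[OF Q _ S]) auto
  then show "n_neg_eig A + card S \<le> n" unfolding sig by simp
qed

lemma signature_half_isotropic:
  fixes A :: "real mat"
  assumes A: "A \<in> carrier_mat n n" "transpose_mat A = A"
    and ker: "\<And>x. x \<in> carrier_vec n \<Longrightarrow> A *\<^sub>v x = 0\<^sub>v n \<Longrightarrow> x = 0\<^sub>v n"
    and S: "S \<subseteq> {..<n}" "card S = n div 2"
    and iso: "\<And>i j. i \<in> S \<Longrightarrow> j \<in> S \<Longrightarrow> A $$ (i,j) = 0"
  shows "signature A = (n div 2, (n + 1) div 2) \<or> signature A = ((n + 1) div 2, n div 2)"
  using n_pos_eig_plus_n_neg_eig[OF A ker] signature_isotropic_bound[OF A S(1) iso] S(2)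
  unfolding signature_def by auto

section \<open>The leading coefficient matrix of the bracket\<close>

lemma index_burby_alpha:
  assumes "i < N" "j < N"
  shows "burby_alpha N mu $$ (i,j) =
    (if (i = 0 \<and> j = 1) \<or> (i = 1 \<and> j = 0) then 1
     else if 2 \<le> i \<and> 2 \<le> j then real (i + j - 2) * mu_trunc N mu (i + j - 3) else 0)"
  using assms unfolding burby_alpha_def by (auto simp: Let_def numeral_3_eq_3)

lemma burby_alpha_carrier: "burby_alpha N mu \<in> carrier_mat N N"
  unfolding burby_alpha_def by auto

lemma burby_alpha_symmetric: "transpose_mat (burby_alpha N mu) = burby_alpha N mu"
  using burby_alpha_carrier[of N mu] by (intro eq_matI) (auto simp: index_burby_alpha add.commute)

lemma burby_alpha_kernel:
  assumes N: "N \<ge> 3" and mu: "mu (N - 2) \<noteq> 0"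
    and x: "x \<in> carrier_vec N" and Ax: "burby_alpha N mu *\<^sub>v x = 0\<^sub>v N"
  shows "x = 0\<^sub>v N"
proof -
  let ?A = "burby_alpha N mu"
  have row: "(\<Sum>j<N. ?A $$ (i,j) * x $ j) = 0" if "i < N" for i
    using arg_cong[OF Ax, of "\<lambda>y. y $ i"] that x burby_alpha_carrier[of N mu]
    by (simp add: scalar_prod_def atLeast0LessThan)
  have single: "?A $$ (i,j0) * x $ j0 = 0"
    if "i < N" "j0 < N" "\<And>j. j < N \<Longrightarrow> j \<noteq> j0 \<Longrightarrow> ?A $$ (i,j) * x $ j = 0" for i j0
    using row[OF that(1)] sum.remove[of "{..<N}" j0 "\<lambda>j. ?A $$ (i,j) * x $ j"] that
    by (simp add: sum.neutral)
  have x1: "x $ 1 = 0" using single[of 0 1] N by (auto simp: index_burby_alpha)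
  have x0: "x $ 0 = 0" using single[of 1 0] N by (auto simp: index_burby_alpha)
  \<comment> \<open>Below the anti-diagonal \<open>i + j = N + 1\<close> the \<open>\<mu>\<close>-block vanishes and on it every entry
    is \<open>(N - 1) \<mu>\<^sub>N\<^sub>-\<^sub>2\<close>, so row \<open>N + 1 - j\<close> determines \<open>x\<^sub>j\<close>.\<close>
  have xj: "x $ j = 0" if "2 \<le> j" "j < N" for j
    using that
  proof (induction j rule: less_induct)
    case (less j)
    define i where "i = N + 1 - j"
    have i: "i < N" "2 \<le> i" using less.prems unfolding i_def by auto
    have "?A $$ (i,j') * x $ j' = 0" if "j' < N" "j' \<noteq> j" for j'
    proof (cases "j' < 2 \<or> j' > j")
      case True
      then show ?thesis using i that unfolding i_def by (auto simp: index_burby_alpha mu_trunc_def)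
    next
      case False
      then show ?thesis using less.IH[of j'] that by auto
    qed
    then have "?A $$ (i,j) * x $ j = 0" using single[OF i(1) less.prems(2)] by blast
    moreover have "?A $$ (i,j) = real (N - 1) * mu (N - 2)"
      using i less.prems N unfolding i_def by (auto simp: index_burby_alpha mu_trunc_def)
    ultimately show ?case using N mu by simp
  qed
  have "x $ i = 0" if "i < N" for i
  proof (cases "2 \<le> i")
    case False
    then have "i = 0 \<or> i = 1" by arith
    then show ?thesis using x0 x1 by auto
  qed (use xj that in auto)
  then show ?thesis using x by (intro eq_vecI) auto
qed

lemma burby_alpha_isotropic:
  assumes "N > 0" and "i \<in> insert 0 {(N + 1) div 2 + 1..<N}" and "j \<in> insert 0 {(N + 1) div 2 + 1..<N}"
  shows "burby_alpha N mu $$ (i,j) = 0"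
  using assms by (auto simp: index_burby_alpha mu_trunc_def)

theorem proposition7:
  fixes N :: nat and mu :: "nat \<Rightarrow> real"
  assumes "N \<ge> 3" and "mu (N - 2) \<noteq> 0"
  shows "burby_bracket_signature N mu = (N div 2, (N + 1) div 2)
       \<or> burby_bracket_signature N mu = ((N + 1) div 2, N div 2)"
proof -
  define S where "S = insert 0 {(N + 1) div 2 + 1..<N}"
  have "S \<subseteq> {..<N}" unfolding S_def using assms(1) by auto
  moreover have "card S = N div 2" unfolding S_def using assms(1) by simp
  moreover have "N > 0" using assms(1) by simp
  ultimately show ?thesis
    unfolding burby_bracket_signature_def
    using signature_half_isotropic[OF burby_alpha_carrier burby_alpha_symmetric
        burby_alpha_kernel[of N mu, OF assms] _ _ burby_alpha_isotropic[of N]]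
    unfolding S_def by blast
qed

end
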